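(* Let $(N(t))_{t\ge 0}$ be the continuous-time Markov chain on $\{1,2,3,\dots\}$ in which state $1$ is absorbing, from state $2$ the chain jumps to $1$ at rate $2$ and to $3$ at rate $2$, and from each state $n\ge 3$ it jumps to $n+1$ at rate $n$ and to $n-1$ at rate $n$. Start at $N(0)=2$, let $H_1$ be the hitting time of state $1$, and let $F(t)=\mathrm{P}(H_1\le t)$ (which is the solution of the renewal equation $F(t) = \frac{2t}{(1+t)^{3}} + \int_{0}^{t}\frac{2}{(1+(t-y))^{3}}F(y)\, \mathrm{d} y$), with density $F'$. Then, as $h\to\infty$, \[ \int_0^{h}tF'(t)\,\mathrm{d} t \sim \log(h) \qquad\text{and}\qquad \int_0^{h}t^2F'(t)\,\mathrm{d} t \sim h . \]
   Context: Here $a(h)\sim b(h)$ means $a(h)/b(h)\to 1$ as $h\to\infty$. The chain describes the number of coexisting viral types in a birth–death model with equal birth and death rates (each equal to the current number of types), where a single type cannot die; $H_1$ is the return time from two types to one type. *)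

theory Defs
  imports "HOL-Analysis.Analysis" "HOL-Library.Landau_Symbols"
begin

definition renewal_solution :: "(real \<Rightarrow> real) \<Rightarrow> bool" where
  "renewal_solution F \<longleftrightarrow> continuous_on {0..} F \<and>
     (\<forall>t\<ge>0. F t = 2 * t / (1 + t) ^ 3
        + integral {0..t} (\<lambda>y. 2 / (1 + (t - y)) ^ 3 * F y))"

end

(*
  Write k u = 2/(1+u)^3 and K u = 1/(1+u)^2, so that K' = -k and K 0 = 1.  Differentiating
  shows that the convolution of K with F is t^2/(1+t)^2.  Subtracting 2/(1+t) times this
  identity from the renewal equation gives, for the increments F(t+d) - F(t), a renewal
  inequality with a nonnegative bounded kernel and an increasing forcing term, so a Gronwall
  argument shows that F is nondecreasing.  Together with the convolution identity for the
  tail 1 - F this squeezes t (1 - F t) to 1.  Finally, integration by parts expresses the two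
  truncated moments through integrals of the tail, and L'Hopital's rule gives ln h and h.
*)
theory Submission
  imports Defs "HOL-Real_Asymp.Real_Asymp"
begin

section \<open>Convolution on the half-line\<close>

definition conv :: "(real \<Rightarrow> real) \<Rightarrow> (real \<Rightarrow> real) \<Rightarrow> real \<Rightarrow> real" where
  "conv h F t = integral {0..t} (\<lambda>y. h (t - y) * F y)"

lemma conv_0 [simp]: "conv h F 0 = 0"
  by (simp add: conv_def)

lemma continuous_on_conv_integrand:
  fixes h F :: "real \<Rightarrow> real"
  assumes "continuous_on {0..} h" "continuous_on {0..} F" "a \<le> t"
  shows "continuous_on {0..a} (\<lambda>y. h (t - y) * F y)"
proof -
  have "continuous_on {0..a} (\<lambda>y. h (t - y))"
    by (rule continuous_on_compose2[OF assms(1)]) (use assms(3) in \<open>auto intro!: continuous_intros\<close>)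
  moreover have "continuous_on {0..a} F" by (rule continuous_on_subset[OF assms(2)]) auto
  ultimately show ?thesis by (intro continuous_intros)
qed

lemma conv_integrable:
  fixes h F :: "real \<Rightarrow> real"
  assumes "continuous_on {0..} h" "continuous_on {0..} F" "a \<le> t"
  shows "(\<lambda>y. h (t - y) * F y) integrable_on {0..a}"
  by (rule integrable_continuous_interval[OF continuous_on_conv_integrand[OF assms]])

lemma conv_diff:
  fixes h F G :: "real \<Rightarrow> real"
  assumes "continuous_on {0..} h" "continuous_on {0..} F" "continuous_on {0..} G"
  shows "conv h F t - conv h G t = conv h (\<lambda>y. F y - G y) t"
proof -
  have "conv h F t - conv h G t = integral {0..t} (\<lambda>y. h (t - y) * F y - h (t - y) * G y)"
    unfolding conv_def by (rule integral_diff[symmetric]) (auto intro!: conv_integrable assms)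
  then show ?thesis by (simp add: conv_def right_diff_distrib)
qed

lemma conv_shift:
  fixes h F :: "real \<Rightarrow> real"
  assumes "continuous_on {0..} h" "continuous_on {0..} F" "0 \<le> t" "0 \<le> \<delta>"
  shows "conv h F (t + \<delta>) = integral {0..\<delta>} (\<lambda>y. h (t + \<delta> - y) * F y) + conv h (\<lambda>u. F (u + \<delta>)) t"
proof -
  let ?f = "\<lambda>y. h (t + \<delta> - y) * F y"
  have "conv h F (t + \<delta>) = integral {0..\<delta>} ?f + integral {\<delta>..t + \<delta>} ?f"
    unfolding conv_def using assms
    by (intro Henstock_Kurzweil_Integration.integral_combine[symmetric] conv_integrable) auto
  also have "integral {\<delta>..t + \<delta>} ?f = integral {0..t} (?f \<circ> (+) \<delta>)"
    using integral_shift_Icc_real[of 0 t ?f \<delta>] by simp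
  also have "\<dots> = conv h (\<lambda>u. F (u + \<delta>)) t"
    unfolding conv_def by (intro integral_cong) (simp add: algebra_simps)
  finally show ?thesis .
qed

lemma conv_mono:
  fixes h F G :: "real \<Rightarrow> real"
  assumes "continuous_on {0..} h" "continuous_on {0..} F" "continuous_on {0..} G"
    and "\<And>u. u \<in> {0..t} \<Longrightarrow> 0 \<le> h u" "\<And>y. y \<in> {0..t} \<Longrightarrow> F y \<le> G y"
  shows "conv h F t \<le> conv h G t"
  unfolding conv_def using assms
  by (intro integral_le conv_integrable mult_left_mono) auto

lemma conv_minus: "conv h (\<lambda>y. - G y) t = - conv h G t"
  by (simp add: conv_def flip: integral_neg)

lemma conv_le_integral_pos_part:
  fixes h G :: "real \<Rightarrow> real"
  assumes h: "continuous_on {0..} h" and G: "continuous_on {0..} G"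
    and bounds: "\<And>u. u \<in> {0..t} \<Longrightarrow> 0 \<le> h u \<and> h u \<le> C"
  shows "conv h G t \<le> C * integral {0..t} (\<lambda>y. max (G y) 0)"
proof -
  have "conv h G t \<le> integral {0..t} (\<lambda>y. C * max (G y) 0)"
    unfolding conv_def
  proof (rule integral_le)
    show "(\<lambda>y. C * max (G y) 0) integrable_on {0..t}"
      by (intro integrable_continuous_interval continuous_intros continuous_on_subset[OF G]) auto
    show "h (t - y) * G y \<le> C * max (G y) 0" if "y \<in> {0..t}" for y
      using bounds[of "t - y"] that by (intro order.trans[OF mult_left_mono mult_right_mono]) auto
  qed (auto intro: conv_integrable h G)
  then show ?thesis
    by simp
qed

text \<open>Subtracting the first-order Taylor polynomial at 0 and extending by 0 to the left makes a
  kernel that is \<open>C\<^sup>1\<close> on \<open>[0, \<infinity>)\<close> into a \<open>C\<^sup>1\<close> function on the whole line, so the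
  convolution with it can be differentiated under the integral sign over a fixed interval.\<close>

definition flat_extension :: "(real \<Rightarrow> real) \<Rightarrow> real \<Rightarrow> real \<Rightarrow> real" where
  "flat_extension h d u = (if u \<in> {0..} then h u - h 0 - d * u else 0)"

lemma has_real_derivative_flat_extension:
  fixes h h' :: "real \<Rightarrow> real"
  assumes "\<And>u. u \<ge> 0 \<Longrightarrow> (h has_real_derivative h' u) (at u)"
  shows "(flat_extension h (h' 0) has_real_derivative h' (max x 0) - h' 0) (at x)"
proof -
  have "(flat_extension h (h' 0) has_vector_derivative
          (if x \<in> {0..} then h' x - h' 0 else 0)) (at x within UNIV)"
    unfolding flat_extension_def[abs_def]
  proof (rule has_vector_derivative_If_within_closures[where T = "{..<0}"])
    show "((\<lambda>u. h u - h 0 - h' 0 * u) has_vector_derivative h' x - h' 0)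
            (at x within {0..} \<union> closure {0..} \<inter> closure {..<0})"
      if "x \<in> {0..} \<union> closure {0..} \<inter> closure {..<0}"
    proof -
      have "x \<ge> 0" using that by auto
      then have "((\<lambda>u. h u - h 0 - h' 0 * u) has_real_derivative h' x - h' 0) (at x)"
        using assms[of x] by (auto intro!: derivative_eq_intros)
      then show ?thesis
        by (simp add: has_real_derivative_iff_has_vector_derivative[symmetric] has_field_derivative_at_within)
    qed
  qed (auto simp: has_vector_derivative_const)
  moreover have "(if x \<in> {0..} then h' x - h' 0 else 0) = h' (max x 0) - h' 0"
    by (auto simp: max_def)
  ultimately show ?thesis
    by (simp add: has_real_derivative_iff_has_vector_derivative)
qed

lemma integral_eq_conv_if_vanishing:
  fixes g F :: "real \<Rightarrow> real"
  assumes "continuous_on UNIV g" "\<And>u. u \<le> 0 \<Longrightarrow> g u = 0" "continuous_on {0..} F"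
    and "0 \<le> t" "t \<le> T"
  shows "integral {0..T} (\<lambda>y. g (t - y) * F y) = conv g F t"
proof -
  have "(\<lambda>y. g (t - y) * F y) integrable_on {0..T}"
    by (intro integrable_continuous_interval continuous_intros continuous_on_compose2[OF assms(1)]
        continuous_on_subset[OF assms(3)]) auto
  then have "integral {0..T} (\<lambda>y. g (t - y) * F y)
      = integral {0..t} (\<lambda>y. g (t - y) * F y) + integral {t..T} (\<lambda>y. g (t - y) * F y)"
    using assms(4,5) by (intro Henstock_Kurzweil_Integration.integral_combine[symmetric])
  also have "integral {t..T} (\<lambda>y. g (t - y) * F y) = 0"
    using assms(2) by (subst integral_cong[where g = "\<lambda>_. 0"]) auto
  finally show ?thesis by (simp add: conv_def)
qed

lemma conv_eq_flat_extension:
  fixes h F :: "real \<Rightarrow> real"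
  assumes "continuous_on {0..} h" "continuous_on {0..} F" "0 \<le> t"
  shows "conv h F t = conv (flat_extension h d) F t + h 0 * integral {0..t} F
           + d * (t * integral {0..t} F - integral {0..t} (\<lambda>y. y * F y))"
proof -
  have "conv (flat_extension h d) F t
      = integral {0..t} (\<lambda>y. h (t - y) * F y - h 0 * F y - d * (t * F y - y * F y))"
    unfolding conv_def by (intro integral_cong) (auto simp: flat_extension_def algebra_simps)
  also have "\<dots> = conv h F t - h 0 * integral {0..t} F
      - d * (t * integral {0..t} F - integral {0..t} (\<lambda>y. y * F y))"
    using continuous_on_conv_integrand[OF assms(1,2), of t t] continuous_on_subset[OF assms(2), of "{0..t}"]
    by (simp add: conv_def integral_diff integrable_continuous_interval continuous_intros integrable_diff)
  finally show ?thesis by simp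
qed

lemma has_real_derivative_conv_vanishing:
  fixes g g' F :: "real \<Rightarrow> real"
  assumes g: "\<And>u. (g has_real_derivative g' u) (at u)" and g': "continuous_on UNIV g'"
    and vanish: "\<And>u. u \<le> 0 \<Longrightarrow> g u = 0 \<and> g' u = 0"
    and F: "continuous_on {0..} F" and t: "0 \<le> t" "t \<le> T"
  shows "(conv g F has_real_derivative conv g' F t) (at t within {0..T})"
proof -
  have g_cont: "continuous_on UNIV g"
    using g by (meson DERIV_isCont continuous_at_imp_continuous_on)
  have eq_conv: "integral {0..T} (\<lambda>y. g (\<tau> - y) * F y) = conv g F \<tau>"
    "integral {0..T} (\<lambda>y. g' (\<tau> - y) * F y) = conv g' F \<tau>" if "0 \<le> \<tau>" "\<tau> \<le> T" for \<tau>
    using that vanish by (auto intro!: integral_eq_conv_if_vanishing F g_cont g')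
  have "((\<lambda>\<tau>. integral (cbox 0 T) (\<lambda>y. g (\<tau> - y) * F y)) has_real_derivative
       integral (cbox 0 T) (\<lambda>y. g' (t - y) * F y)) (at t within {0..T})"
  proof (rule leibniz_rule_field_derivative)
    show "((\<lambda>x. g (x - y) * F y) has_real_derivative g' (x - y) * F y) (at x within {0..T})" for x y
    proof -
      have "((\<lambda>x. g (x - y)) has_real_derivative g' (x - y) * 1) (at x within {0..T})"
        by (rule DERIV_chain2[OF g]) (auto intro!: derivative_eq_intros)
      from DERIV_cmult_right[OF this, of "F y"] show ?thesis by simp
    qed
    show "(\<lambda>y. g (x - y) * F y) integrable_on cbox 0 T" for x
      by (auto intro!: integrable_continuous_interval continuous_intros
          continuous_on_compose2[OF g_cont] continuous_on_subset[OF F])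
    show "continuous_on ({0..T} \<times> cbox 0 T) (\<lambda>(x, y). g' (x - y) * F y)"
      unfolding split_beta
      by (intro continuous_intros continuous_on_compose2[OF g'] continuous_on_compose2[OF F]) auto
  qed (use t in auto)
  then have "((\<lambda>\<tau>. integral {0..T} (\<lambda>y. g (\<tau> - y) * F y)) has_real_derivative conv g' F t)
      (at t within {0..T})"
    using eq_conv(2)[of t] t by simp
  then show ?thesis
    by (rule has_field_derivative_transform_within[where d = 1]) (use t eq_conv(1) in auto)
qed

lemma has_real_derivative_conv:
  fixes h h' F :: "real \<Rightarrow> real"
  assumes h: "\<And>u. u \<ge> 0 \<Longrightarrow> (h has_real_derivative h' u) (at u)"
    and h': "continuous_on {0..} h'" and F: "continuous_on {0..} F"
    and t: "0 \<le> t" "t \<le> T"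
  shows "(conv h F has_real_derivative h 0 * F t + conv h' F t) (at t within {0..T})"
proof -
  define \<psi>' where "\<psi>' u = h' (max u 0) - h' 0" for u
  have h_cont: "continuous_on {0..} h"
    using h by (meson DERIV_isCont atLeast_iff continuous_at_imp_continuous_on)
  have "(conv (flat_extension h (h' 0)) F has_real_derivative conv \<psi>' F t) (at t within {0..T})"
  proof (rule has_real_derivative_conv_vanishing[OF _ _ _ F t])
    show "(flat_extension h (h' 0) has_real_derivative \<psi>' u) (at u)" for u
      unfolding \<psi>'_def by (rule has_real_derivative_flat_extension[OF h])
    show "continuous_on UNIV \<psi>'"
      unfolding \<psi>'_def by (intro continuous_intros continuous_on_compose2[OF h']) auto
  qed (auto simp: \<psi>'_def flat_extension_def)
  moreover have indefinite: "((\<lambda>\<tau>. integral {0..\<tau>} g) has_real_derivative g t) (at t within {0..T})"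
    if "continuous_on {0..} g" for g
    using integral_has_real_derivative[OF continuous_on_subset[OF that]] t by auto
  note indefinite[OF F]
  moreover have "continuous_on {0..} (\<lambda>y. y * F y)"
    using F by (intro continuous_intros)
  note indefinite[OF this]
  ultimately have "((\<lambda>\<tau>. conv (flat_extension h (h' 0)) F \<tau> + h 0 * integral {0..\<tau>} F
      + h' 0 * (\<tau> * integral {0..\<tau>} F - integral {0..\<tau>} (\<lambda>y. y * F y))) has_real_derivative
      conv \<psi>' F t + h 0 * F t + h' 0 * (1 * integral {0..t} F + t * F t - t * F t)) (at t within {0..T})"
    by (intro derivative_eq_intros) auto
  moreover have "conv \<psi>' F t = conv h' F t - h' 0 * integral {0..t} F"
    unfolding conv_def \<psi>'_def
    using t continuous_on_conv_integrand[OF h' F, of t t] continuous_on_subset[OF F, of "{0..t}"]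
    by (subst integral_cong[where g = "\<lambda>y. h' (t - y) * F y - h' 0 * F y"])
       (auto simp: algebra_simps integral_diff integrable_continuous_interval continuous_intros)
  ultimately have "((\<lambda>\<tau>. conv (flat_extension h (h' 0)) F \<tau> + h 0 * integral {0..\<tau>} F
      + h' 0 * (\<tau> * integral {0..\<tau>} F - integral {0..\<tau>} (\<lambda>y. y * F y))) has_real_derivative
      h 0 * F t + conv h' F t) (at t within {0..T})"
    by (auto elim: DERIV_cong simp: algebra_simps)
  then show ?thesis
    by (rule has_field_derivative_transform_within[where d = 1])
       (use t conv_eq_flat_extension[OF h_cont F] in auto)
qed

lemma conv_kernel_diff:
  fixes a b F :: "real \<Rightarrow> real"
  assumes "continuous_on {0..} a" "continuous_on {0..} b" "continuous_on {0..} F" "0 \<le> t"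
  shows "conv (\<lambda>u. a u - c * b u) F t = conv a F t - c * conv b F t"
proof -
  have "conv (\<lambda>u. a u - c * b u) F t = integral {0..t} (\<lambda>y. a (t - y) * F y - c * (b (t - y) * F y))"
    unfolding conv_def by (simp add: algebra_simps)
  also have "\<dots> = conv a F t - c * conv b F t"
    unfolding conv_def using assms
    by (subst integral_diff)
       (auto simp: integrable_continuous_interval continuous_on_conv_integrand intro!: integrable_on_mult_right)
  finally show ?thesis .
qed

section \<open>Kernel identities for the renewal equation\<close>

lemma
  assumes "renewal_solution F"
  shows renewal_solution_continuous: "continuous_on {0..} F"
    and renewal_solution_eq: "t \<ge> 0 \<Longrightarrow> F t = 2 * t / (1 + t) ^ 3 + conv (\<lambda>u. 2 / (1 + u) ^ 3) F t"
  using assms by (auto simp: renewal_solution_def conv_def)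

lemma renewal_solution_at_0: "renewal_solution F \<Longrightarrow> F 0 = 0"
  by (simp add: renewal_solution_def)

lemma continuous_on_power_kernel: "continuous_on {0..} (\<lambda>u::real. c / (1 + u) ^ n)"
  by (intro continuous_intros) auto

lemma conv_renewal_solution:
  fixes F :: "real \<Rightarrow> real"
  assumes F: "renewal_solution F" and t: "t \<ge> 0"
  shows "conv (\<lambda>u. 1 / (1 + u) ^ 2) F t = t ^ 2 / (1 + t) ^ 2"
proof -
  \<comment> \<open>Both sides vanish at 0 and have derivative \<open>2t/(1+t)\<^sup>3\<close>, by the renewal equation.\<close>
  obtain c where c: "\<forall>x\<in>{0..t}. conv (\<lambda>u. 1 / (1 + u) ^ 2) F x - x ^ 2 / (1 + x) ^ 2 = c"
  proof (atomize_elim, rule has_field_derivative_zero_constant)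
    fix x assume x: "x \<in> {0..t}"
    have D1: "(conv (\<lambda>u. 1 / (1 + u) ^ 2) F has_real_derivative
           1 / (1 + 0) ^ 2 * F x + conv (\<lambda>u. - (2 / (1 + u) ^ 3)) F x) (at x within {0..t})"
    proof (rule has_real_derivative_conv[OF _ _ renewal_solution_continuous[OF F]])
      show "((\<lambda>u. 1 / (1 + u) ^ 2) has_real_derivative - (2 / (1 + u) ^ 3)) (at u)" if "u \<ge> 0" for u :: real
        using that
        by (auto intro!: derivative_eq_intros simp: divide_simps add_nonneg_eq_0_iff)
           (simp add: algebra_simps eval_nat_numeral)
    qed (use x in \<open>auto intro!: continuous_intros\<close>)
    have eq: "conv (\<lambda>u. - (2 / (1 + u) ^ 3)) F x = 2 * x / (1 + x) ^ 3 - F x"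
      using renewal_solution_eq[OF F, of x] x by (simp add: conv_def integral_neg)
    have D2: "((\<lambda>x. x ^ 2 / (1 + x) ^ 2) has_real_derivative 2 * x / (1 + x) ^ 3) (at x within {0..t})"
      using x
      by (auto intro!: derivative_eq_intros simp: divide_simps add_nonneg_eq_0_iff)
         (simp add: algebra_simps eval_nat_numeral)
    show "((\<lambda>x. conv (\<lambda>u. 1 / (1 + u) ^ 2) F x - x ^ 2 / (1 + x) ^ 2) has_real_derivative 0)
        (at x within {0..t})"
      using DERIV_diff[OF D1 D2] eq by simp
  qed auto
  from c[rule_format, of 0] c[rule_format, of t] t show ?thesis by simp
qed

section \<open>Monotonicity of the solution\<close>

text \<open>For \<open>c = 2/(1+t)\<close> the modified kernel is nonnegative on \<open>[0, t]\<close> and the modified forcing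
  term has derivative \<open>2/(1+t)\<^sup>4 > 0\<close> at \<open>t\<close>; this is what makes the increments of \<open>F\<close>
  nonnegative.\<close>

lemma renewal_solution_eq_modified_kernel:
  fixes F :: "real \<Rightarrow> real"
  assumes F: "renewal_solution F" and t: "t \<ge> 0"
  shows "F t = 2 * t / (1 + t) ^ 3 + c * (t ^ 2 / (1 + t) ^ 2)
           + conv (\<lambda>u. 2 / (1 + u) ^ 3 - c * (1 / (1 + u) ^ 2)) F t"
proof -
  have "conv (\<lambda>u. 2 / (1 + u) ^ 3 - c * (1 / (1 + u) ^ 2)) F t
      = conv (\<lambda>u. 2 / (1 + u) ^ 3) F t - c * conv (\<lambda>u. 1 / (1 + u) ^ 2) F t"
    by (rule conv_kernel_diff) (use F t in \<open>auto intro: continuous_on_power_kernel renewal_solution_continuous\<close>)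
  then show ?thesis
    using renewal_solution_eq[OF F t] conv_renewal_solution[OF F t] by simp
qed

lemma modified_kernel_eq:
  fixes s t :: real
  assumes "0 \<le> s" "0 \<le> t"
  shows "2 / (1 + s) ^ 3 - 2 / (1 + t) * (1 / (1 + s) ^ 2) = 2 * (t - s) / ((1 + t) * (1 + s) ^ 3)"
  using assms
  by (simp add: divide_simps add_nonneg_eq_0_iff) (simp add: algebra_simps eval_nat_numeral)

lemma modified_kernel_bounds:
  fixes s t :: real
  assumes "0 \<le> s" "s \<le> t"
  shows "0 \<le> 2 / (1 + s) ^ 3 - 2 / (1 + t) * (1 / (1 + s) ^ 2)"
    and "2 / (1 + s) ^ 3 - 2 / (1 + t) * (1 / (1 + s) ^ 2) \<le> 2"
proof -
  have "2 * (t - s) / ((1 + t) * (1 + s) ^ 3) \<le> 2 * (1 + t) / ((1 + t) * 1)"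
    using assms by (intro frac_le mult_left_mono one_le_power) auto
  also have "\<dots> = 2"
    using assms by (simp add: field_simps)
  finally show "2 / (1 + s) ^ 3 - 2 / (1 + t) * (1 / (1 + s) ^ 2) \<le> 2"
    using assms by (subst modified_kernel_eq) auto
qed (use assms in \<open>subst modified_kernel_eq, auto\<close>)

lemma modified_kernel_bound_beyond:
  fixes s t :: real
  assumes "0 \<le> t" "t \<le> s" "s \<le> t + \<delta>"
  shows "\<bar>2 / (1 + s) ^ 3 - 2 / (1 + t) * (1 / (1 + s) ^ 2)\<bar> \<le> 2 * \<delta> / (1 + t) ^ 4"
proof -
  have "(1 + t) ^ 4 = (1 + t) * (1 + t) ^ 3"
    by (simp add: eval_nat_numeral)
  also have "\<dots> \<le> (1 + t) * (1 + s) ^ 3"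
    using assms by (intro mult_left_mono power_mono) auto
  finally have "(1 + t) ^ 4 \<le> (1 + t) * (1 + s) ^ 3" .
  then have "2 * (s - t) / ((1 + t) * (1 + s) ^ 3) \<le> 2 * \<delta> / (1 + t) ^ 4"
    using assms by (intro frac_le) auto
  then show ?thesis
    using assms by (subst modified_kernel_eq) auto
qed

lemma modified_forcing_increment:
  fixes t \<delta> M :: real
  assumes t: "0 \<le> t" and \<delta>: "0 < \<delta>" "\<delta> \<le> 1" and M: "0 \<le> M" "\<delta> * M \<le> 1/8"
  shows "2 * \<delta> ^ 2 * M / (1 + t) ^ 4
    \<le> (2 * (t + \<delta>) / (1 + (t + \<delta>)) ^ 3 + 2 / (1 + t) * ((t + \<delta>) ^ 2 / (1 + (t + \<delta>)) ^ 2))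
      - (2 * t / (1 + t) ^ 3 + 2 / (1 + t) * (t ^ 2 / (1 + t) ^ 2))"
proof -
  define x X where "x = 1 + t" and "X = 1 + (t + \<delta>)"
  have x: "1 \<le> x" "0 < X" "x \<le> X" "X \<le> 2 * x" "X - x = \<delta>"
    using t \<delta> by (auto simp: x_def X_def)
  have "(2 * (X - 1) / X ^ 3 + 2 / x * ((X - 1) ^ 2 / X ^ 2)) - (2 * (x - 1) / x ^ 3 + 2 / x * ((x - 1) ^ 2 / x ^ 2))
      = 2 * (X - x) ^ 2 / (x ^ 2 * X ^ 2) + 2 * (X - x) / (x * X ^ 3)"
    using x(1,2) by (simp add: field_simps power2_eq_square power3_eq_cube)
  then have "(2 * (t + \<delta>) / (1 + (t + \<delta>)) ^ 3 + 2 / (1 + t) * ((t + \<delta>) ^ 2 / (1 + (t + \<delta>)) ^ 2))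
      - (2 * t / (1 + t) ^ 3 + 2 / (1 + t) * (t ^ 2 / (1 + t) ^ 2))
      = 2 * \<delta> ^ 2 / (x ^ 2 * X ^ 2) + 2 * \<delta> / (x * X ^ 3)"
    unfolding x_def X_def by (simp add: algebra_simps)
  moreover have "2 * \<delta> ^ 2 * M / x ^ 4 \<le> 2 * \<delta> / (x * X ^ 3)"
  proof -
    have "\<delta> * M * X ^ 3 \<le> 1/8 * (2 * x) ^ 3"
      using x M \<delta> by (intro mult_mono power_mono) auto
    then have "\<delta> * M * X ^ 3 \<le> x ^ 3"
      by (simp add: power_mult_distrib)
    have "2 * \<delta> ^ 2 * M / x ^ 4 = 2 * \<delta> * (\<delta> * M * X ^ 3) / (x ^ 4 * X ^ 3)"
      using x(1,2) by (simp add: field_simps power2_eq_square)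
    also have "\<dots> \<le> 2 * \<delta> * x ^ 3 / (x ^ 4 * X ^ 3)"
      using \<open>\<delta> * M * X ^ 3 \<le> x ^ 3\<close> \<delta> x(1,2) by (intro divide_right_mono mult_left_mono) auto
    also have "\<dots> = 2 * \<delta> / (x * X ^ 3)"
      using x(1,2) by (simp add: eval_nat_numeral)
    finally show ?thesis .
  qed
  moreover have "0 \<le> 2 * \<delta> ^ 2 / (x ^ 2 * X ^ 2)"
    by simp
  ultimately show ?thesis
    unfolding x_def [symmetric] X_def [symmetric] by linarith
qed

lemma modified_kernel_boundary_term_ge:
  fixes F :: "real \<Rightarrow> real"
  assumes F: "continuous_on {0..} F" and t: "0 \<le> t" and \<delta>: "0 \<le> \<delta>"
    and M: "\<And>y. y \<in> {0..\<delta>} \<Longrightarrow> \<bar>F y\<bar> \<le> M"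
  shows "- (2 * \<delta> ^ 2 * M / (1 + t) ^ 4)
           \<le> integral {0..\<delta>} (\<lambda>y. (2 / (1 + (t + \<delta> - y)) ^ 3 - 2 / (1 + t) * (1 / (1 + (t + \<delta> - y)) ^ 2)) * F y)"
proof -
  let ?f = "\<lambda>y. (2 / (1 + (t + \<delta> - y)) ^ 3 - 2 / (1 + t) * (1 / (1 + (t + \<delta> - y)) ^ 2)) * F y"
  have "norm (integral {0..\<delta>} ?f) \<le> 2 * \<delta> / (1 + t) ^ 4 * M * (\<delta> - 0)"
  proof (rule integral_bound)
    show "continuous_on {0..\<delta>} ?f"
      using t by (intro continuous_intros continuous_on_subset[OF F]) auto
    show "norm (?f y) \<le> 2 * \<delta> / (1 + t) ^ 4 * M" if "y \<in> {0..\<delta>}" for y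
      unfolding real_norm_def abs_mult using that t M[of y]
      by (intro mult_mono modified_kernel_bound_beyond) auto
  qed (use \<delta> in auto)
  moreover have "2 * \<delta> / (1 + t) ^ 4 * M * (\<delta> - 0) = 2 * \<delta> ^ 2 * M / (1 + t) ^ 4"
    by (simp add: power2_eq_square)
  ultimately show ?thesis
    by (simp only: real_norm_def)
qed

lemma renewal_solution_increment_ge:
  fixes F :: "real \<Rightarrow> real"
  assumes F: "renewal_solution F" and t: "0 \<le> t"
    and \<delta>: "0 < \<delta>" "\<delta> \<le> 1" and M: "0 \<le> M" "\<delta> * M \<le> 1/8" "\<And>y. y \<in> {0..1} \<Longrightarrow> \<bar>F y\<bar> \<le> M"
  shows "conv (\<lambda>s. 2 / (1 + s) ^ 3 - 2 / (1 + t) * (1 / (1 + s) ^ 2)) (\<lambda>u. F (u + \<delta>) - F u) t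
           \<le> F (t + \<delta>) - F t"
proof -
  define \<kappa> where "\<kappa> = (\<lambda>s. 2 / (1 + s) ^ 3 - 2 / (1 + t) * (1 / (1 + s) ^ 2))"
  define S where "S = integral {0..\<delta>} (\<lambda>y. \<kappa> (t + \<delta> - y) * F y)"
  have F_cont: "continuous_on {0..} F"
    using renewal_solution_continuous[OF F] .
  have F_shift_cont: "continuous_on {0..} (\<lambda>u. F (u + \<delta>))"
    using \<delta> by (intro continuous_on_compose2[OF F_cont] continuous_intros) auto
  have \<kappa>_cont: "continuous_on {0..} \<kappa>"
    unfolding \<kappa>_def by (intro continuous_intros) auto
  have "F (t + \<delta>) - F t
      = (2 * (t + \<delta>) / (1 + (t + \<delta>)) ^ 3 + 2 / (1 + t) * ((t + \<delta>) ^ 2 / (1 + (t + \<delta>)) ^ 2))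
        - (2 * t / (1 + t) ^ 3 + 2 / (1 + t) * (t ^ 2 / (1 + t) ^ 2))
        + (conv \<kappa> F (t + \<delta>) - conv \<kappa> F t)"
    using renewal_solution_eq_modified_kernel[OF F, of "t + \<delta>" "2 / (1 + t)"]
      renewal_solution_eq_modified_kernel[OF F t, of "2 / (1 + t)"] t \<delta>
    by (simp add: \<kappa>_def)
  moreover have "conv \<kappa> F (t + \<delta>) - conv \<kappa> F t = S + conv \<kappa> (\<lambda>u. F (u + \<delta>) - F u) t"
    using conv_shift[OF \<kappa>_cont F_cont t, of \<delta>] conv_diff[OF \<kappa>_cont F_shift_cont F_cont, of t] \<delta>
    by (simp add: S_def)
  moreover have "- (2 * \<delta> ^ 2 * M / (1 + t) ^ 4) \<le> S"
    unfolding S_def \<kappa>_def using \<delta> M(3)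
    by (intro modified_kernel_boundary_term_ge[OF F_cont t]) auto
  moreover note modified_forcing_increment[OF t \<delta> M(1,2)]
  ultimately show ?thesis
    unfolding \<kappa>_def by linarith
qed

lemma nonneg_le_integral_imp_zero:
  fixes \<phi> :: "real \<Rightarrow> real"
  assumes cont: "continuous_on {0..T} \<phi>" and nonneg: "\<And>t. t \<in> {0..T} \<Longrightarrow> 0 \<le> \<phi> t"
    and le: "\<And>t. t \<in> {0..T} \<Longrightarrow> \<phi> t \<le> C * integral {0..t} \<phi>" and C: "0 \<le> C"
    and t: "t \<in> {0..T}"
  shows "\<phi> t = 0"
proof -
  \<comment> \<open>Gronwall: \<open>e\<^sup>-\<^sup>C\<^sup>s \<integral>\<^sub>0\<^sup>s \<phi>\<close> is non-increasing and vanishes at 0.\<close>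
  define \<Phi> where "\<Phi> s = exp (- C * s) * integral {0..s} \<phi>" for s
  define \<Phi>' where "\<Phi>' s = exp (- C * s) * (\<phi> s - C * integral {0..s} \<phi>)" for s
  have "(\<Phi> has_real_derivative \<Phi>' s) (at s within {0..t})" if "s \<in> {0..t}" for s
  proof -
    have "continuous_on {0..t} \<phi>"
      by (rule continuous_on_subset[OF cont]) (use t in auto)
    then have "((\<lambda>s. integral {0..s} \<phi>) has_real_derivative \<phi> s) (at s within {0..t})"
      using integral_has_real_derivative that by blast
    then show ?thesis
      unfolding \<Phi>_def [abs_def] \<Phi>'_def by (auto intro!: derivative_eq_intros simp: algebra_simps)
  qed
  then obtain x where x: "x \<in> {0..t}" and mvt: "\<Phi> t - \<Phi> 0 = (t - 0) * \<Phi>' x"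
    using mvt_very_simple[of 0 t \<Phi> "\<lambda>x h. h * \<Phi>' x"] t
    by (auto simp: has_field_derivative_def mult_commute_abs)
  have "\<Phi>' x \<le> 0"
    using le[of x] x t by (auto simp: \<Phi>'_def mult_nonneg_nonpos)
  then have "\<Phi> t \<le> 0"
    using mvt t by (simp add: \<Phi>_def mult_nonneg_nonpos)
  then have "integral {0..t} \<phi> \<le> 0"
    by (simp add: \<Phi>_def mult_le_0_iff)
  then have "\<phi> t \<le> 0"
    using le[OF t] C by (smt (verit) mult_nonneg_nonpos)
  then show ?thesis
    using nonneg[OF t] by simp
qed

lemma renewal_solution_le_shift:
  fixes F :: "real \<Rightarrow> real"
  assumes F: "renewal_solution F" and t: "0 \<le> t"
    and \<delta>: "0 < \<delta>" "\<delta> \<le> 1" and M: "0 \<le> M" "\<delta> * M \<le> 1/8" "\<And>y. y \<in> {0..1} \<Longrightarrow> \<bar>F y\<bar> \<le> M"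
  shows "F t \<le> F (t + \<delta>)"
proof -
  define D where "D u = F (u + \<delta>) - F u" for u
  define N where "N u = max (- D u) 0" for u
  have F_cont: "continuous_on {0..} F"
    using renewal_solution_continuous[OF F] .
  have D_cont: "continuous_on {0..} D"
    unfolding D_def using \<delta> by (intro continuous_intros continuous_on_compose2[OF F_cont]) auto
  have N_cont: "continuous_on {0..} N"
    unfolding N_def by (intro continuous_intros D_cont)
  have "N u \<le> 2 * integral {0..u} N" if u: "u \<in> {0..t}" for u
  proof -
    let ?\<kappa> = "\<lambda>s. 2 / (1 + s) ^ 3 - 2 / (1 + u) * (1 / (1 + s) ^ 2)"
    have "conv ?\<kappa> D u \<le> D u"
      using renewal_solution_increment_ge[OF F _ \<delta> M, of u] u by (simp add: D_def [abs_def])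
    then have "- D u \<le> conv ?\<kappa> (\<lambda>y. - D y) u"
      by (simp add: conv_minus)
    also have "\<dots> \<le> 2 * integral {0..u} N"
      unfolding N_def using u modified_kernel_bounds[of _ u]
      by (intro conv_le_integral_pos_part continuous_intros D_cont) auto
    finally show ?thesis
      using integral_nonneg[of N "{0..u}"] continuous_on_subset[OF N_cont, of "{0..u}"] u
      by (auto simp: N_def integrable_continuous_interval)
  qed
  then have "N t = 0"
    by (intro nonneg_le_integral_imp_zero[of t N 2] continuous_on_subset[OF N_cont])
       (use t in \<open>auto simp: N_def\<close>)
  then show ?thesis
    by (simp add: N_def D_def)
qed

lemma le_if_le_small_shifts:
  fixes f :: "real \<Rightarrow> 'a :: preorder"
  assumes shift: "\<And>s \<delta>. 0 \<le> s \<Longrightarrow> 0 < \<delta> \<Longrightarrow> \<delta> \<le> \<delta>\<^sub>0 \<Longrightarrow> f s \<le> f (s + \<delta>)"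
    and \<delta>\<^sub>0: "0 < \<delta>\<^sub>0" and ab: "0 \<le> a" "a < b"
  shows "f a \<le> f b"
proof -
  define n where "n = nat \<lceil>(b - a) / \<delta>\<^sub>0\<rceil>"
  define d where "d = (b - a) / n"
  have "(b - a) / \<delta>\<^sub>0 \<le> n"
    unfolding n_def by linarith
  then have n: "b - a \<le> n * \<delta>\<^sub>0" "0 < n"
    using ab \<delta>\<^sub>0 by (auto simp: divide_le_eq mult.commute intro!: gr0I)
  then have d: "0 < d" "d \<le> \<delta>\<^sub>0"
    using ab by (auto simp: d_def divide_le_eq mult.commute)
  have "f a \<le> f (a + k * d)" for k :: nat
  proof (induction k)
    case (Suc k)
    have "f (a + k * d) \<le> f (a + k * d + d)"
      using ab d by (intro shift) auto
    then show ?case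
      using Suc.IH by (simp add: algebra_simps order_trans)
  qed simp
  from this[of n] show ?thesis
    using n by (simp add: d_def)
qed

lemma renewal_solution_mono:
  fixes F :: "real \<Rightarrow> real"
  assumes F: "renewal_solution F" and ab: "0 \<le> a" "a \<le> b"
  shows "F a \<le> F b"
proof -
  have "continuous_on {0..1} (\<lambda>y. \<bar>F y\<bar>)"
    by (intro continuous_intros continuous_on_subset[OF renewal_solution_continuous[OF F]]) auto
  then obtain x where "\<And>y. y \<in> {0..1} \<Longrightarrow> \<bar>F y\<bar> \<le> \<bar>F x\<bar>"
    using continuous_attains_sup[of "{0..1}" "\<lambda>y. \<bar>F y\<bar>"] by force
  then obtain M where M: "0 \<le> M" "\<And>y. y \<in> {0..1} \<Longrightarrow> \<bar>F y\<bar> \<le> M"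
    by (meson abs_ge_zero)
  define \<delta>\<^sub>0 where "\<delta>\<^sub>0 = min 1 (1 / (8 * (M + 1)))"
  have "F s \<le> F (s + \<delta>)" if "0 \<le> s" "0 < \<delta>" "\<delta> \<le> \<delta>\<^sub>0" for s \<delta>
  proof (rule renewal_solution_le_shift[OF F that(1,2) _ M(1) _ M(2)])
    show "\<delta> \<le> 1"
      using that(3) by (simp add: \<delta>\<^sub>0_def)
    have "\<delta> * M \<le> 1 / (8 * (M + 1)) * M"
      using that M(1) by (intro mult_right_mono) (auto simp: \<delta>\<^sub>0_def)
    also have "\<dots> \<le> 1/8"
      using M(1) by (simp add: field_simps)
    finally show "\<delta> * M \<le> 1/8" .
  qed
  moreover have "0 < \<delta>\<^sub>0"
    using M(1) by (simp add: \<delta>\<^sub>0_def)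
  ultimately show ?thesis
    using ab le_if_le_small_shifts[of \<delta>\<^sub>0 F a b] by (cases "a = b") auto
qed

section \<open>The tail of the solution\<close>

lemma integral_kernel_tail:
  fixes a t :: real
  assumes "0 \<le> a" "a \<le> t"
  shows "integral {a..t} (\<lambda>y. 1 / (1 + (t - y)) ^ 2) = 1 - 1 / (1 + (t - a))"
proof -
  have "((\<lambda>y. 1 / (1 + (t - y)) ^ 2) has_integral (1 / (1 + (t - t)) - 1 / (1 + (t - a)))) {a..t}"
  proof (rule fundamental_theorem_of_calculus[OF assms(2)])
    show "((\<lambda>y. 1 / (1 + (t - y))) has_vector_derivative 1 / (1 + (t - x)) ^ 2) (at x within {a..t})"
      if "x \<in> {a..t}" for x
      using that assms unfolding has_real_derivative_iff_has_vector_derivative[symmetric]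
      by (auto intro!: derivative_eq_intros simp: power2_eq_square)
  qed
  then show ?thesis
    by (simp add: integral_unique)
qed

lemma integral_inverse_one_plus:
  fixes s :: real
  assumes "0 \<le> s"
  shows "integral {0..s} (\<lambda>y. 1 / (1 + y)) = ln (1 + s)"
proof -
  have "((\<lambda>y. 1 / (1 + y)) has_integral (ln (1 + s) - ln (1 + 0))) {0..s}"
  proof (rule fundamental_theorem_of_calculus[OF assms])
    show "((\<lambda>y. ln (1 + y)) has_vector_derivative 1 / (1 + x)) (at x within {0..s})"
      if "x \<in> {0..s}" for x
      using that unfolding has_real_derivative_iff_has_vector_derivative[symmetric]
      by (auto intro!: derivative_eq_intros simp: field_simps)
  qed
  then show ?thesis
    by (simp add: integral_unique)
qed

lemma conv_kernel_const:
  fixes t c :: real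
  assumes "0 \<le> t"
  shows "conv (\<lambda>u. 1 / (1 + u) ^ 2) (\<lambda>_. c) t = c * (t / (1 + t))"
proof -
  have "conv (\<lambda>u. 1 / (1 + u) ^ 2) (\<lambda>_. c) t = c * integral {0..t} (\<lambda>y. 1 / (1 + (t - y)) ^ 2)"
    unfolding conv_def by (subst integral_mult_right[symmetric]) (simp add: mult.commute)
  also have "\<dots> = c * (t / (1 + t))"
    using integral_kernel_tail[of 0 t] assms by (simp add: field_simps)
  finally show ?thesis .
qed

lemma conv_tail_renewal_solution:
  fixes F :: "real \<Rightarrow> real"
  assumes F: "renewal_solution F" and t: "0 \<le> t"
  shows "conv (\<lambda>u. 1 / (1 + u) ^ 2) (\<lambda>y. 1 - F y) t = t / (1 + t) ^ 2"
proof -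
  have "conv (\<lambda>u. 1 / (1 + u) ^ 2) (\<lambda>y. 1 - F y) t
      = conv (\<lambda>u. 1 / (1 + u) ^ 2) (\<lambda>_. 1) t - conv (\<lambda>u. 1 / (1 + u) ^ 2) F t"
    by (rule conv_diff[symmetric]) (auto intro: continuous_on_power_kernel renewal_solution_continuous[OF F])
  also have "\<dots> = t / (1 + t) - t ^ 2 / (1 + t) ^ 2"
    using conv_kernel_const[OF t, of 1] conv_renewal_solution[OF F t] by simp
  also have "\<dots> = t / (1 + t) ^ 2"
    using t by (simp add: divide_simps add_nonneg_eq_0_iff) (simp add: algebra_simps power2_eq_square)
  finally show ?thesis .
qed

lemma renewal_solution_tail_le:
  fixes F :: "real \<Rightarrow> real"
  assumes F: "renewal_solution F" and t: "0 \<le> t"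
  shows "1 - F t \<le> 1 / (1 + t)"
proof (cases "t = 0")
  case True
  then show ?thesis
    using renewal_solution_at_0[OF F] by simp
next
  case False
  have "(1 - F t) * (t / (1 + t)) = conv (\<lambda>u. 1 / (1 + u) ^ 2) (\<lambda>_. 1 - F t) t"
    using conv_kernel_const[OF t] by simp
  also have "\<dots> \<le> conv (\<lambda>u. 1 / (1 + u) ^ 2) (\<lambda>y. 1 - F y) t"
    using renewal_solution_mono[OF F] renewal_solution_continuous[OF F]
    by (intro conv_mono continuous_on_power_kernel continuous_intros) auto
  also have "\<dots> = (1 / (1 + t)) * (t / (1 + t))"
    using conv_tail_renewal_solution[OF F t] by (simp add: power2_eq_square)
  finally show ?thesis
    by (rule mult_right_le_imp_le) (use False t in auto)
qed

lemma renewal_solution_conv_tail_head_le: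
  fixes F :: "real \<Rightarrow> real"
  assumes F: "renewal_solution F" and s: "0 \<le> s" and a: "0 < a"
  shows "integral {0..s} (\<lambda>y. 1 / (1 + (s + a - y)) ^ 2 * (1 - F y)) \<le> ln (1 + s) / (1 + a) ^ 2"
proof -
  have "integral {0..s} (\<lambda>y. 1 / (1 + (s + a - y)) ^ 2 * (1 - F y))
      \<le> integral {0..s} (\<lambda>y. 1 / (1 + a) ^ 2 * (1 / (1 + y)))"
  proof (rule integral_le)
    show "(\<lambda>y. 1 / (1 + (s + a - y)) ^ 2 * (1 - F y)) integrable_on {0..s}"
      using a by (intro integrable_continuous_interval continuous_intros
          continuous_on_subset[OF renewal_solution_continuous[OF F]]) auto
    show "(\<lambda>y. 1 / (1 + a) ^ 2 * (1 / (1 + y))) integrable_on {0..s}"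
      by (intro integrable_continuous_interval continuous_intros) auto
    show "1 / (1 + (s + a - y)) ^ 2 * (1 - F y) \<le> 1 / (1 + a) ^ 2 * (1 / (1 + y))" if y: "y \<in> {0..s}" for y
    proof -
      have "1 / (1 + (s + a - y)) ^ 2 * (1 - F y) \<le> 1 / (1 + (s + a - y)) ^ 2 * (1 / (1 + y))"
        using y a renewal_solution_tail_le[OF F, of y] by (intro mult_left_mono) auto
      also have "\<dots> \<le> 1 / (1 + a) ^ 2 * (1 / (1 + y))"
        using y a by (intro mult_right_mono divide_left_mono power_mono) auto
      finally show ?thesis .
    qed
  qed
  also have "\<dots> = ln (1 + s) / (1 + a) ^ 2"
    using integral_inverse_one_plus[OF s] by (simp only: integral_mult_right) simp
  finally show ?thesis .
qed

lemma renewal_solution_tail_ge: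
  fixes F :: "real \<Rightarrow> real"
  assumes F: "renewal_solution F" and s: "0 \<le> s" and a: "0 < a"
  shows "(s + a) / (1 + (s + a)) ^ 2 \<le> ln (1 + s) / (1 + a) ^ 2 + (1 - F s) * (a / (1 + a))"
proof -
  \<comment> \<open>Split the convolution at \<open>s\<close>; after \<open>s\<close> the tail is at most its value at \<open>s\<close>.\<close>
  define t where "t = s + a"
  define f where "f y = 1 / (1 + (t - y)) ^ 2 * (1 - F y)" for y
  have t: "0 \<le> t" "s \<le> t"
    using s a by (auto simp: t_def)
  have F_cont: "continuous_on {0..} F"
    using renewal_solution_continuous[OF F] .
  have f_cont: "continuous_on {0..t} f"
    unfolding f_def using t by (intro continuous_intros continuous_on_subset[OF F_cont]) auto
  have "t / (1 + t) ^ 2 = integral {0..t} f"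
    using conv_tail_renewal_solution[OF F t(1)] by (simp add: conv_def f_def[abs_def])
  also have "\<dots> = integral {0..s} f + integral {s..t} f"
    using s t
    by (intro Henstock_Kurzweil_Integration.integral_combine[symmetric] integrable_continuous_interval f_cont)
  also have "integral {0..s} f \<le> ln (1 + s) / (1 + a) ^ 2"
    using renewal_solution_conv_tail_head_le[OF F s a] by (simp add: f_def [abs_def] t_def)
  also have "integral {s..t} f \<le> integral {s..t} (\<lambda>y. 1 / (1 + (t - y)) ^ 2 * (1 - F s))"
  proof (rule integral_le)
    show "f integrable_on {s..t}"
      using s by (intro integrable_continuous_interval continuous_on_subset[OF f_cont]) auto
    show "(\<lambda>y. 1 / (1 + (t - y)) ^ 2 * (1 - F s)) integrable_on {s..t}"
      by (intro integrable_continuous_interval continuous_intros) auto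
    show "f y \<le> 1 / (1 + (t - y)) ^ 2 * (1 - F s)" if y: "y \<in> {s..t}" for y
      unfolding f_def using y renewal_solution_mono[OF F s, of y] by (intro mult_left_mono) auto
  qed
  also have "\<dots> = (1 - F s) * (a / (1 + a))"
    using integral_kernel_tail[OF s t(2)] a
    by (simp only: integral_mult_left) (simp add: t_def field_simps)
  finally show ?thesis
    by (simp add: t_def)
qed

lemma renewal_solution_tail_asymp:
  fixes F :: "real \<Rightarrow> real"
  assumes F: "renewal_solution F"
  shows "((\<lambda>s. s * (1 - F s)) \<longlongrightarrow> 1) at_top"
proof (rule tendsto_sandwich)
  \<comment> \<open>The lower bound is \<open>renewal_solution_tail_ge\<close> with the gap \<open>a = s\<^sup>3\<^sup>/\<^sup>4\<close>, which is \<open>o(s)\<close>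
      but makes \<open>ln s / a\<^sup>2\<close> negligible.\<close>
  define L where "L s = s * (1 + s powr (3/4)) / s powr (3/4)
    * ((s + s powr (3/4)) / (1 + (s + s powr (3/4))) ^ 2 - ln (1 + s) / (1 + s powr (3/4)) ^ 2)" for s :: real
  show "(L \<longlongrightarrow> 1) at_top"
    unfolding L_def by real_asymp
  show "((\<lambda>s::real. s * (1 / (1 + s))) \<longlongrightarrow> 1) at_top"
    by real_asymp
  show "\<forall>\<^sub>F s in at_top. L s \<le> s * (1 - F s)"
  proof (rule eventually_mono[OF eventually_gt_at_top[of 0]])
    fix s :: real
    assume s: "0 < s"
    define a where "a = s powr (3/4)"
    have a: "0 < a"
      using s by (simp add: a_def)
    have "(s + a) / (1 + (s + a)) ^ 2 - ln (1 + s) / (1 + a) ^ 2 \<le> (1 - F s) * (a / (1 + a))"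
      using renewal_solution_tail_ge[OF F _ a, of s] s by simp
    then have "(1 + a) / a * ((s + a) / (1 + (s + a)) ^ 2 - ln (1 + s) / (1 + a) ^ 2) \<le> 1 - F s"
      using a by (simp add: field_simps)
    then have "s * ((1 + a) / a * ((s + a) / (1 + (s + a)) ^ 2 - ln (1 + s) / (1 + a) ^ 2)) \<le> s * (1 - F s)"
      using s by (intro mult_left_mono) auto
    then show "L s \<le> s * (1 - F s)"
      by (simp add: L_def a_def)
  qed
  show "\<forall>\<^sub>F s in at_top. s * (1 - F s) \<le> s * (1 / (1 + s))"
    using eventually_gt_at_top[of 0]
  proof eventually_elim
    case (elim s)
    then show ?case
      using renewal_solution_tail_le[OF F, of s] by (intro mult_left_mono) auto
  qed
qed

section \<open>Truncated moments\<close>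

lemma has_real_derivative_integral_from_0:
  fixes g :: "real \<Rightarrow> real"
  assumes g: "continuous_on {0..} g" and x: "0 < x"
  shows "((\<lambda>t. integral {0..t} g) has_real_derivative g x) (at x)"
proof -
  have "continuous_on {0..x + 1} g"
    by (rule continuous_on_subset[OF g]) auto
  then have "((\<lambda>t. integral {0..t} g) has_real_derivative g x) (at x within {0..x + 1})"
    using integral_has_real_derivative[of 0 "x + 1" g x] x by auto
  then have "((\<lambda>t. integral {0..t} g) has_real_derivative g x) (at x within {0<..<x + 1})"
    by (rule DERIV_subset) auto
  moreover have "at x within {0<..<x + 1} = at x"
    using x by (intro at_within_open) auto
  ultimately show ?thesis
    by simp
qed

lemma integral_power_mult_derivative:
  fixes F F' :: "real \<Rightarrow> real"
  assumes F: "continuous_on {0..} F" and F': "\<And>t. 0 < t \<Longrightarrow> (F has_real_derivative F' t) (at t)"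
    and h: "0 \<le> h"
  shows "integral {0..h} (\<lambda>t. t ^ Suc n * F' t)
           = Suc n * integral {0..h} (\<lambda>t. t ^ n * (1 - F t)) - h ^ Suc n * (1 - F h)"
proof -
  define G where "G t = Suc n * integral {0..t} (\<lambda>y. y ^ n * (1 - F y)) - t ^ Suc n * (1 - F t)" for t
  have R_cont: "continuous_on {0..} (\<lambda>y. y ^ n * (1 - F y))"
    using F by (intro continuous_intros)
  have "((\<lambda>t. t ^ Suc n * F' t) has_integral G h - G 0) {0..h}"
  proof (rule fundamental_theorem_of_calculus_interior[OF h])
    show "continuous_on {0..h} G"
      unfolding G_def
      by (intro continuous_intros indefinite_integral_continuous_1 integrable_continuous_interval
          continuous_on_subset[OF R_cont] continuous_on_subset[OF F]) auto
    show "(G has_vector_derivative x ^ Suc n * F' x) (at x)" if "x \<in> {0<..<h}" for x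
    proof -
      have "0 < x"
        using that by simp
      note D = has_real_derivative_integral_from_0[OF R_cont this] F'[OF this]
      have "(G has_real_derivative x ^ Suc n * F' x) (at x)"
        unfolding G_def by (rule derivative_eq_intros D refl)+ (simp add: algebra_simps)
      then show ?thesis
        by (simp add: has_real_derivative_iff_has_vector_derivative)
    qed
  qed
  then show ?thesis
    by (simp add: integral_unique G_def)
qed

lemma integral_asymp_of_tail:
  fixes R :: "real \<Rightarrow> real"
  assumes R: "continuous_on {0..} R" and lim: "((\<lambda>s. s * R s) \<longlongrightarrow> 1) at_top"
  shows "((\<lambda>h. integral {0..h} R / ln h) \<longlongrightarrow> 1) at_top"
    and "((\<lambda>h. integral {0..h} (\<lambda>t. t * R t) / h) \<longlongrightarrow> 1) at_top"
proof -
  have tR: "continuous_on {0..} (\<lambda>t. t * R t)"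
    using R by (intro continuous_intros)
  show "((\<lambda>h. integral {0..h} R / ln h) \<longlongrightarrow> 1) at_top"
  proof (rule lhospital_at_top_at_top[where f' = R and g' = "\<lambda>t. 1 / t"])
    show "\<forall>\<^sub>F x in at_top. ((\<lambda>h. integral {0..h} R) has_real_derivative R x) (at x)"
      using eventually_gt_at_top[of 0] by eventually_elim (rule has_real_derivative_integral_from_0[OF R])
    show "\<forall>\<^sub>F x in at_top. (ln has_real_derivative 1 / x) (at x)"
      using eventually_gt_at_top[of 0] by eventually_elim (auto intro!: derivative_eq_intros)
    show "((\<lambda>x. R x / (1 / x)) \<longlongrightarrow> 1) at_top"
      using lim by (simp add: mult.commute)
  qed (auto intro: ln_at_top)
  show "((\<lambda>h. integral {0..h} (\<lambda>t. t * R t) / h) \<longlongrightarrow> 1) at_top"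
  proof (rule lhospital_at_top_at_top[where f' = "\<lambda>t. t * R t" and g' = "\<lambda>t. 1"])
    show "\<forall>\<^sub>F x in at_top. ((\<lambda>h. integral {0..h} (\<lambda>t. t * R t)) has_real_derivative x * R x) (at x)"
      using eventually_gt_at_top[of 0] by eventually_elim (rule has_real_derivative_integral_from_0[OF tR])
    show "((\<lambda>x. x * R x / 1) \<longlongrightarrow> 1) at_top"
      using lim by simp
  qed (auto intro: filterlim_ident)
qed

lemma moments_asymp_of_tail:
  fixes F F' :: "real \<Rightarrow> real"
  assumes F: "continuous_on {0..} F" and F': "\<And>t. 0 < t \<Longrightarrow> (F has_real_derivative F' t) (at t)"
    and tail: "((\<lambda>s. s * (1 - F s)) \<longlongrightarrow> 1) at_top"
  shows "(\<lambda>h. integral {0..h} (\<lambda>t. t * F' t)) \<sim>[at_top] (\<lambda>h. ln h)"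
    and "(\<lambda>h. integral {0..h} (\<lambda>t. t ^ 2 * F' t)) \<sim>[at_top] (\<lambda>h. h)"
proof -
  have R: "continuous_on {0..} (\<lambda>t. 1 - F t)"
    using F by (intro continuous_intros)
  note moment = integral_power_mult_derivative[OF F F']
  have "((\<lambda>h. integral {0..h} (\<lambda>t. 1 - F t) / ln h - h * (1 - F h) * (1 / ln h)) \<longlongrightarrow> 1 - 1 * 0) at_top"
    by (intro tendsto_intros integral_asymp_of_tail(1)[OF R tail] tail) real_asymp
  moreover have "\<forall>\<^sub>F h in at_top. integral {0..h} (\<lambda>t. 1 - F t) / ln h - h * (1 - F h) * (1 / ln h)
      = integral {0..h} (\<lambda>t. t * F' t) / ln h"
    using eventually_gt_at_top[of 0]
    by eventually_elim (use moment[of _ 0] in \<open>simp add: diff_divide_distrib\<close>)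
  ultimately show "(\<lambda>h. integral {0..h} (\<lambda>t. t * F' t)) \<sim>[at_top] (\<lambda>h. ln h)"
    by (intro asymp_equivI') (simp add: tendsto_cong)
  have "((\<lambda>h. 2 * (integral {0..h} (\<lambda>t. t * (1 - F t)) / h) - h * (1 - F h)) \<longlongrightarrow> 2 * 1 - 1) at_top"
    by (intro tendsto_intros integral_asymp_of_tail(2)[OF R tail] tail)
  moreover have "\<forall>\<^sub>F h in at_top. 2 * (integral {0..h} (\<lambda>t. t * (1 - F t)) / h) - h * (1 - F h)
      = integral {0..h} (\<lambda>t. t ^ 2 * F' t) / h"
    using eventually_gt_at_top[of 0]
    by eventually_elim (use moment[of _ 1] in \<open>simp add: field_simps power2_eq_square\<close>)
  ultimately show "(\<lambda>h. integral {0..h} (\<lambda>t. t ^ 2 * F' t)) \<sim>[at_top] (\<lambda>h. h)"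
    by (intro asymp_equivI') (simp add: tendsto_cong)
qed

theorem lemma2:
  fixes F F' :: "real \<Rightarrow> real"
  assumes "renewal_solution F"
    and "\<And>t. t > 0 \<Longrightarrow> (F has_real_derivative F' t) (at t)"
  shows "((\<lambda>h. integral {0..h} (\<lambda>t. t * F' t)) \<sim>[at_top] (\<lambda>h. ln h)) \<and>
         ((\<lambda>h. integral {0..h} (\<lambda>t. t ^ 2 * F' t)) \<sim>[at_top] (\<lambda>h. h))"
  using moments_asymp_of_tail[OF renewal_solution_continuous[OF assms(1)] assms(2)
      renewal_solution_tail_asymp[OF assms(1)]]
  by blast

end
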